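(* Let $G$ and $H$ be graphs. If for every graph $K$ the conditions $G\mid K$ and $H\mid K$ together imply $G\otimes H\mid K$, then $G$ and $H$ are strongly disjoint.
   Context: A weight function on finite $U$ is $\alpha:U\times U\to\mathbb{R}$, $\alpha\ge0$, symmetric, summing to $1$; degree $p(u)=\sum_{u'}\alpha(u,u')$; a graph is $(U,\alpha)$. The tensor product of $G=(U,\alpha)$, $H=(V,\beta)$ is $G\otimes H=(U\times V,\alpha\otimes\beta)$ with $(\alpha\otimes\beta)((u,v),(u',v'))=\alpha(u,u')\beta(v,v')$. For graphs $G=(U,\alpha)$, $H=(V,\beta)$ with degrees $p,q$, $H\mid G$ means there is a surjective $\phi:U\to V$ with (i) $q(v)=\sum_{u\in\phi^{-1}(v)}p(u)$ for all $v$, and (ii) $q(v)\sum_{u'\in\phi^{-1}(v')}\alpha(u,u')=p(u)\beta(v,v')$ for all $v,v'$, $u\in\phi^{-1}(v)$. A weight joining of $\alpha,\beta$ is a weight function $\gamma$ on $U\times V$ with degree $r(u,v)=\sum_{(u',v')}\gamma((u,v),(u',v'))$ such that $\sum_v r(u,v)=p(u)$, $\sum_u r(u,v)=q(v)$, $p(u)\sum_{\tilde v}\gamma((u,v),(u',\tilde v))=\alpha(u,u')r(u,v)$ and $q(v)\sum_{\tilde u}\gamma((u,v),(\tilde u,v'))=\beta(v,v')r(u,v)$. $G,H$ are strongly disjoint if the only weight joining is $\alpha\otimes\beta$. *)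

theory Defs
  imports Complex_Main
begin

text \<open>A graph is a pair (U, alpha): a finite vertex set U and a weight function
  alpha on U x U (nonnegative, symmetric, total sum 1). Only values on U x U matter.\<close>

definition is_graph :: "'a set \<Rightarrow> ('a \<Rightarrow> 'a \<Rightarrow> real) \<Rightarrow> bool" where
  "is_graph U \<alpha> \<longleftrightarrow> finite U
     \<and> (\<forall>u\<in>U. \<forall>u'\<in>U. \<alpha> u u' \<ge> 0)
     \<and> (\<forall>u\<in>U. \<forall>u'\<in>U. \<alpha> u u' = \<alpha> u' u)
     \<and> (\<Sum>u\<in>U. \<Sum>u'\<in>U. \<alpha> u u') = 1"

definition deg :: "'a set \<Rightarrow> ('a \<Rightarrow> 'a \<Rightarrow> real) \<Rightarrow> 'a \<Rightarrow> real" where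
  "deg U \<alpha> u = (\<Sum>u'\<in>U. \<alpha> u u')"

definition tensor :: "('a \<Rightarrow> 'a \<Rightarrow> real) \<Rightarrow> ('b \<Rightarrow> 'b \<Rightarrow> real)
    \<Rightarrow> ('a \<times> 'b) \<Rightarrow> ('a \<times> 'b) \<Rightarrow> real" where
  "tensor \<alpha> \<beta> x y = \<alpha> (fst x) (fst y) * \<beta> (snd x) (snd y)"

text \<open>graph_divides V beta U alpha  means  (V,beta) | (U,alpha), i.e. H | G with H = (V,beta).\<close>
definition graph_divides :: "'b set \<Rightarrow> ('b \<Rightarrow> 'b \<Rightarrow> real) \<Rightarrow> 'a set \<Rightarrow> ('a \<Rightarrow> 'a \<Rightarrow> real) \<Rightarrow> bool" where
  "graph_divides V \<beta> U \<alpha> \<longleftrightarrow> (\<exists>\<phi>. \<phi> ` U = V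
     \<and> (\<forall>v\<in>V. deg V \<beta> v = (\<Sum>u\<in>{u\<in>U. \<phi> u = v}. deg U \<alpha> u))
     \<and> (\<forall>v\<in>V. \<forall>v'\<in>V. \<forall>u\<in>U. \<phi> u = v \<longrightarrow>
          deg V \<beta> v * (\<Sum>u'\<in>{u'\<in>U. \<phi> u' = v'}. \<alpha> u u') = deg U \<alpha> u * \<beta> v v'))"

definition weight_joining :: "'a set \<Rightarrow> ('a \<Rightarrow> 'a \<Rightarrow> real) \<Rightarrow> 'b set \<Rightarrow> ('b \<Rightarrow> 'b \<Rightarrow> real)
    \<Rightarrow> ('a \<times> 'b \<Rightarrow> 'a \<times> 'b \<Rightarrow> real) \<Rightarrow> bool" where
  "weight_joining U \<alpha> V \<beta> \<gamma> \<longleftrightarrow> is_graph (U \<times> V) \<gamma>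
     \<and> (\<forall>u\<in>U. (\<Sum>v\<in>V. deg (U \<times> V) \<gamma> (u, v)) = deg U \<alpha> u)
     \<and> (\<forall>v\<in>V. (\<Sum>u\<in>U. deg (U \<times> V) \<gamma> (u, v)) = deg V \<beta> v)
     \<and> (\<forall>u\<in>U. \<forall>v\<in>V. \<forall>u'\<in>U.
          deg U \<alpha> u * (\<Sum>v''\<in>V. \<gamma> (u, v) (u', v'')) = \<alpha> u u' * deg (U \<times> V) \<gamma> (u, v))
     \<and> (\<forall>u\<in>U. \<forall>v\<in>V. \<forall>v'\<in>V.
          deg V \<beta> v * (\<Sum>u''\<in>U. \<gamma> (u, v) (u'', v')) = \<beta> v v' * deg (U \<times> V) \<gamma> (u, v))"

definition strongly_disjoint :: "'a set \<Rightarrow> ('a \<Rightarrow> 'a \<Rightarrow> real) \<Rightarrow> 'b set \<Rightarrow> ('b \<Rightarrow> 'b \<Rightarrow> real) \<Rightarrow> bool" where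
  "strongly_disjoint U \<alpha> V \<beta> \<longleftrightarrow> (\<forall>\<gamma>. weight_joining U \<alpha> V \<beta> \<gamma> \<longrightarrow>
      (\<forall>x\<in>U \<times> V. \<forall>y\<in>U \<times> V. \<gamma> x y = tensor \<alpha> \<beta> x y))"

end

theory Submission
  imports Defs
begin

text \<open>
  A weight joining \<gamma> makes (U \<times> V, \<gamma>) a graph of which G and H are quotients via the two
  projections, so by hypothesis G \<otimes> H divides it as well. Both graphs have |U| |V| vertices,
  hence the quotient map is an isomorphism, and \<gamma> has the same entropy as \<alpha> \<otimes> \<beta>, namely
  H(\<alpha>) + H(\<beta>). Since \<gamma> has edge marginals \<alpha> and \<beta>, its cross entropy against \<alpha> \<otimes> \<beta> is
  H(\<alpha>) + H(\<beta>) too, and the equality case of Gibbs' inequality forces \<gamma> = \<alpha> \<otimes> \<beta>.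
\<close>

lemma is_graph_finite: "is_graph U \<alpha> \<Longrightarrow> finite U"
  by (simp add: is_graph_def)

lemma is_graph_nonneg: "is_graph U \<alpha> \<Longrightarrow> u \<in> U \<Longrightarrow> u' \<in> U \<Longrightarrow> 0 \<le> \<alpha> u u'"
  by (simp add: is_graph_def)

lemma is_graph_nonempty: "is_graph U \<alpha> \<Longrightarrow> U \<noteq> {}"
  by (auto simp: is_graph_def)

lemma deg_nonneg: "is_graph U \<alpha> \<Longrightarrow> u \<in> U \<Longrightarrow> 0 \<le> deg U \<alpha> u"
  unfolding deg_def by (rule sum_nonneg) (auto simp: is_graph_def)

lemma weight_eq_0_if_deg_eq_0:
  assumes "is_graph U \<alpha>" "u \<in> U" "u' \<in> U" "deg U \<alpha> u = 0"
  shows "\<alpha> u u' = 0"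
  using assms sum_nonneg_eq_0_iff[of U "\<alpha> u"] by (auto simp: is_graph_def deg_def)

lemma member_le_double_sum:
  fixes w :: "'a \<Rightarrow> 'a \<Rightarrow> real"
  assumes "finite V" "\<And>v v'. v \<in> V \<Longrightarrow> v' \<in> V \<Longrightarrow> 0 \<le> w v v'" "v \<in> V" "v' \<in> V"
  shows "w v v' \<le> (\<Sum>v\<in>V. \<Sum>v'\<in>V. w v v')"
proof -
  have "w v v' \<le> (\<Sum>v'\<in>V. w v v')"
    using assms by (intro member_le_sum) auto
  also have "\<dots> \<le> (\<Sum>v\<in>V. \<Sum>v'\<in>V. w v v')"
    using assms by (intro member_le_sum sum_nonneg) auto
  finally show ?thesis .
qed

lemma deg_relabel:
  assumes f: "bij_betw f W X" and \<kappa>: "\<And>i j. i \<in> W \<Longrightarrow> j \<in> W \<Longrightarrow> \<kappa> i j = \<gamma> (f i) (f j)"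
    and i: "i \<in> W"
  shows "deg W \<kappa> i = deg X \<gamma> (f i)"
  unfolding deg_def using sum.reindex_bij_betw[OF f, of "\<gamma> (f i)"] \<kappa> i by simp

lemma is_graph_relabel:
  assumes f: "bij_betw f W X" and \<kappa>: "\<And>i j. i \<in> W \<Longrightarrow> j \<in> W \<Longrightarrow> \<kappa> i j = \<gamma> (f i) (f j)"
    and K: "is_graph X \<gamma>"
  shows "is_graph W \<kappa>"
proof -
  have fW: "f i \<in> X" if "i \<in> W" for i
    using f that by (auto simp: bij_betw_def)
  have "(\<Sum>i\<in>W. \<Sum>j\<in>W. \<kappa> i j) = (\<Sum>i\<in>W. deg X \<gamma> (f i))"
    using deg_relabel[of f W X \<kappa> \<gamma>, OF f \<kappa>] by (simp add: deg_def)
  also have "\<dots> = (\<Sum>x\<in>X. deg X \<gamma> x)"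
    using sum.reindex_bij_betw[OF f] by simp
  also have "\<dots> = 1"
    using K by (simp add: is_graph_def deg_def)
  finally show ?thesis
    using K fW \<kappa> bij_betw_finite[OF f] unfolding is_graph_def by simp
qed

lemma graph_divides_relabel:
  assumes f: "bij_betw f W X" and \<kappa>: "\<And>i j. i \<in> W \<Longrightarrow> j \<in> W \<Longrightarrow> \<kappa> i j = \<gamma> (f i) (f j)"
    and D: "graph_divides Y s X \<gamma>"
  shows "graph_divides Y s W \<kappa>"
proof -
  from D obtain \<phi> where im: "\<phi> ` X = Y"
    and d1: "\<forall>v\<in>Y. deg Y s v = (\<Sum>u\<in>{u\<in>X. \<phi> u = v}. deg X \<gamma> u)"
    and d2: "\<forall>v\<in>Y. \<forall>v'\<in>Y. \<forall>u\<in>X. \<phi> u = v \<longrightarrow>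
          deg Y s v * (\<Sum>u'\<in>{u'\<in>X. \<phi> u' = v'}. \<gamma> u u') = deg X \<gamma> u * s v v'"
    unfolding graph_divides_def by blast
  have fibre: "bij_betw f {i\<in>W. \<phi> (f i) = v} {x\<in>X. \<phi> x = v}" for v
    using f unfolding bij_betw_def inj_on_def by (auto simp: image_iff)
  show ?thesis unfolding graph_divides_def
  proof (intro exI[of _ "\<phi> \<circ> f"] conjI ballI impI)
    show "(\<phi> \<circ> f) ` W = Y"
      using im f unfolding bij_betw_def by (metis image_comp)
  next
    fix v assume "v \<in> Y"
    have "(\<Sum>i\<in>{i\<in>W. (\<phi> \<circ> f) i = v}. deg W \<kappa> i) = (\<Sum>i\<in>{i\<in>W. \<phi> (f i) = v}. deg X \<gamma> (f i))"
      by (intro sum.cong) (auto simp: deg_relabel[of f W X \<kappa> \<gamma>, OF f \<kappa>])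
    also have "\<dots> = (\<Sum>u\<in>{u\<in>X. \<phi> u = v}. deg X \<gamma> u)"
      by (rule sum.reindex_bij_betw[OF fibre])
    finally show "deg Y s v = (\<Sum>i\<in>{i\<in>W. (\<phi> \<circ> f) i = v}. deg W \<kappa> i)"
      using d1 \<open>v \<in> Y\<close> by simp
  next
    fix v v' i assume "v \<in> Y" "v' \<in> Y" "i \<in> W" "(\<phi> \<circ> f) i = v"
    have "(\<Sum>j\<in>{j\<in>W. (\<phi> \<circ> f) j = v'}. \<kappa> i j) = (\<Sum>j\<in>{j\<in>W. \<phi> (f j) = v'}. \<gamma> (f i) (f j))"
      using \<kappa> \<open>i \<in> W\<close> by (intro sum.cong) auto
    also have "\<dots> = (\<Sum>x\<in>{x\<in>X. \<phi> x = v'}. \<gamma> (f i) x)"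
      by (rule sum.reindex_bij_betw[OF fibre])
    finally show "deg Y s v * (\<Sum>j\<in>{j\<in>W. (\<phi> \<circ> f) j = v'}. \<kappa> i j) = deg W \<kappa> i * s v v'"
      using d2 \<open>v \<in> Y\<close> \<open>v' \<in> Y\<close> \<open>i \<in> W\<close> \<open>(\<phi> \<circ> f) i = v\<close> f
      by (auto simp: deg_relabel[of f W X \<kappa> \<gamma>, OF f \<kappa>] bij_betw_def)
  qed
qed

lemma graph_divides_nat_copy:
  assumes K: "is_graph X \<gamma>"
    and nat: "\<And>(W :: nat set) \<kappa>. is_graph W \<kappa> \<Longrightarrow> graph_divides A a W \<kappa> \<Longrightarrow>
      graph_divides B b W \<kappa> \<Longrightarrow> graph_divides C c W \<kappa>"
    and DA: "graph_divides A a X \<gamma>" and DB: "graph_divides B b X \<gamma>"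
  shows "graph_divides C c X \<gamma>"
proof -
  obtain f where f: "bij_betw f {0..<card X} X"
    using ex_bij_betw_nat_finite[OF is_graph_finite[OF K]] by blast
  define \<kappa> where "\<kappa> i j = \<gamma> (f i) (f j)" for i j
  have \<kappa>_f: "\<kappa> i j = \<gamma> (f i) (f j)" for i j
    by (simp add: \<kappa>_def)
  have "graph_divides C c {0..<card X} \<kappa>"
  proof (rule nat)
    show "is_graph {0..<card X} \<kappa>"
      using f \<kappa>_f K by (rule is_graph_relabel)
    show "graph_divides A a {0..<card X} \<kappa>"
      using f \<kappa>_f DA by (rule graph_divides_relabel)
    show "graph_divides B b {0..<card X} \<kappa>"
      using f \<kappa>_f DB by (rule graph_divides_relabel)
  qed
  moreover have "bij_betw (inv_into {0..<card X} f) X {0..<card X}"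
    by (rule bij_betw_inv_into[OF f])
  moreover have "\<gamma> x y = \<kappa> (inv_into {0..<card X} f x) (inv_into {0..<card X} f y)"
    if "x \<in> X" "y \<in> X" for x y
    using f that by (simp add: \<kappa>_def bij_betw_inv_into_right)
  ultimately show ?thesis
    using graph_divides_relabel by blast
qed

lemma graph_divides_same_card_imp_iso:
  assumes K: "is_graph X \<gamma>" and S: "is_graph Y s" and card: "card Y = card X"
    and D: "graph_divides Y s X \<gamma>"
  obtains \<theta> where "bij_betw \<theta> X Y" and "\<And>x y. x \<in> X \<Longrightarrow> y \<in> X \<Longrightarrow> \<gamma> x y = s (\<theta> x) (\<theta> y)"
proof -
  from D obtain \<phi> where im: "\<phi> ` X = Y"
    and d1: "\<forall>v\<in>Y. deg Y s v = (\<Sum>u\<in>{u\<in>X. \<phi> u = v}. deg X \<gamma> u)"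
    and d2: "\<forall>v\<in>Y. \<forall>v'\<in>Y. \<forall>u\<in>X. \<phi> u = v \<longrightarrow>
          deg Y s v * (\<Sum>u'\<in>{u'\<in>X. \<phi> u' = v'}. \<gamma> u u') = deg X \<gamma> u * s v v'"
    unfolding graph_divides_def by blast
  have inj: "inj_on \<phi> X"
    using eq_card_imp_inj_on[OF is_graph_finite[OF K], of \<phi>] im card by simp
  then have fibre: "{u\<in>X. \<phi> u = \<phi> x} = {x}" if "x \<in> X" for x
    using that by (auto simp: inj_on_def)
  have "\<gamma> x y = s (\<phi> x) (\<phi> y)" if x: "x \<in> X" and y: "y \<in> X" for x y
  proof -
    have \<phi>xy: "\<phi> x \<in> Y" "\<phi> y \<in> Y"
      using im x y by auto
    have deg_eq: "deg Y s (\<phi> x) = deg X \<gamma> x"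
      using d1 \<phi>xy fibre[OF x] by simp
    have "deg Y s (\<phi> x) * \<gamma> x y = deg X \<gamma> x * s (\<phi> x) (\<phi> y)"
      using d2 \<phi>xy x fibre[OF y] by force
    then show ?thesis
      using deg_eq weight_eq_0_if_deg_eq_0[OF K x y] weight_eq_0_if_deg_eq_0[OF S \<phi>xy]
      by (cases "deg X \<gamma> x = 0") auto
  qed
  moreover have "bij_betw \<phi> X Y"
    using inj im by (simp add: bij_betw_def)
  ultimately show ?thesis
    using that by blast
qed

lemma sum_product_pairs_fst:
  "(\<Sum>x\<in>U \<times> V. \<Sum>y\<in>U \<times> V. F x y) = (\<Sum>u\<in>U. \<Sum>u'\<in>U. \<Sum>v\<in>V. \<Sum>v'\<in>V. F (u, v) (u', v'))"
proof -
  have "(\<Sum>x\<in>U \<times> V. \<Sum>y\<in>U \<times> V. F x y) = (\<Sum>u\<in>U. \<Sum>v\<in>V. \<Sum>u'\<in>U. \<Sum>v'\<in>V. F (u, v) (u', v'))"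
    by (simp add: sum.cartesian_product')
  also have "\<dots> = (\<Sum>u\<in>U. \<Sum>u'\<in>U. \<Sum>v\<in>V. \<Sum>v'\<in>V. F (u, v) (u', v'))"
    by (intro sum.cong refl) (rule sum.swap)
  finally show ?thesis .
qed

lemma sum_product_pairs_snd:
  "(\<Sum>x\<in>U \<times> V. \<Sum>y\<in>U \<times> V. F x y) = (\<Sum>v\<in>V. \<Sum>v'\<in>V. \<Sum>u\<in>U. \<Sum>u'\<in>U. F (u, v) (u', v'))"
proof -
  have "(\<Sum>x\<in>U \<times> V. \<Sum>y\<in>U \<times> V. F x y) = (\<Sum>p\<in>U \<times> U. \<Sum>q\<in>V \<times> V. F (fst p, fst q) (snd p, snd q))"
    unfolding sum_product_pairs_fst by (simp add: sum.cartesian_product')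
  also have "\<dots> = (\<Sum>q\<in>V \<times> V. \<Sum>p\<in>U \<times> U. F (fst p, fst q) (snd p, snd q))"
    by (rule sum.swap)
  also have "\<dots> = (\<Sum>v\<in>V. \<Sum>v'\<in>V. \<Sum>u\<in>U. \<Sum>u'\<in>U. F (u, v) (u', v'))"
    by (simp add: sum.cartesian_product')
  finally show ?thesis .
qed

lemma is_graph_tensor:
  assumes G: "is_graph U \<alpha>" and H: "is_graph V \<beta>"
  shows "is_graph (U \<times> V) (tensor \<alpha> \<beta>)"
proof -
  have "(\<Sum>x\<in>U \<times> V. \<Sum>y\<in>U \<times> V. tensor \<alpha> \<beta> x y)
      = (\<Sum>u\<in>U. \<Sum>u'\<in>U. \<alpha> u u' * (\<Sum>v\<in>V. \<Sum>v'\<in>V. \<beta> v v'))"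
    by (simp add: sum_product_pairs_fst tensor_def sum_distrib_left)
  also have "\<dots> = (\<Sum>u\<in>U. \<Sum>u'\<in>U. \<alpha> u u') * (\<Sum>v\<in>V. \<Sum>v'\<in>V. \<beta> v v')"
    by (simp add: sum_distrib_right)
  also have "\<dots> = 1"
    using G H by (simp add: is_graph_def)
  finally show ?thesis
    using G H by (auto simp: is_graph_def tensor_def)
qed

lemma weight_joining_is_graph: "weight_joining U \<alpha> V \<beta> \<gamma> \<Longrightarrow> is_graph (U \<times> V) \<gamma>"
  by (simp add: weight_joining_def)

lemma weight_joining_swap:
  assumes J: "weight_joining U \<alpha> V \<beta> \<gamma>"
  shows "weight_joining V \<beta> U \<alpha> (\<lambda>x y. \<gamma> (prod.swap x) (prod.swap y))"
proof -
  let ?\<gamma>' = "\<lambda>x y. \<gamma> (prod.swap x) (prod.swap y)"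
  have sw: "bij_betw prod.swap (V \<times> U) (U \<times> V)"
    by (simp add: bij_betw_def product_swap)
  have deg_swap: "deg (V \<times> U) ?\<gamma>' (v, u) = deg (U \<times> V) \<gamma> (u, v)" if "u \<in> U" "v \<in> V" for u v
    using deg_relabel[of prod.swap "V \<times> U" "U \<times> V" ?\<gamma>' \<gamma>, OF sw] that by simp
  have "is_graph (V \<times> U) ?\<gamma>'"
    by (rule is_graph_relabel[OF sw _ weight_joining_is_graph[OF J]]) simp
  then show ?thesis
    using J deg_swap unfolding weight_joining_def by simp
qed

lemma weight_joining_divides_fst:
  assumes J: "weight_joining U \<alpha> V \<beta> \<gamma>"
  shows "graph_divides U \<alpha> (U \<times> V) \<gamma>"
proof -
  have fibre: "{x \<in> U \<times> V. fst x = u} = Pair u ` V" if "u \<in> U" for u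
    using that by auto
  have sum_fibre: "(\<Sum>x\<in>{x \<in> U \<times> V. fst x = u}. g x) = (\<Sum>v\<in>V. g (u, v))" if "u \<in> U" for u and g :: "'a \<times> 'b \<Rightarrow> real"
    using that by (simp add: fibre sum.reindex inj_on_def)
  have "V \<noteq> {}"
    using is_graph_nonempty[OF weight_joining_is_graph[OF J]] by auto
  then show ?thesis
    unfolding graph_divides_def
    using J by (intro exI[of _ fst]) (auto simp: sum_fibre weight_joining_def mult.commute)
qed

lemma weight_joining_divides_snd:
  assumes J: "weight_joining U \<alpha> V \<beta> \<gamma>"
  shows "graph_divides V \<beta> (U \<times> V) \<gamma>"
proof (rule graph_divides_relabel)
  show "bij_betw prod.swap (U \<times> V) (V \<times> U)"
    by (simp add: bij_betw_def product_swap)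
  show "graph_divides V \<beta> (V \<times> U) (\<lambda>x y. \<gamma> (prod.swap x) (prod.swap y))"
    by (rule weight_joining_divides_fst[OF weight_joining_swap[OF J]])
qed simp

lemma weight_joining_marginal_fst:
  assumes J: "weight_joining U \<alpha> V \<beta> \<gamma>" and G: "is_graph U \<alpha>" and u: "u \<in> U" and u': "u' \<in> U"
  shows "(\<Sum>v\<in>V. \<Sum>v'\<in>V. \<gamma> (u, v) (u', v')) = \<alpha> u u'"
proof -
  let ?r = "deg (U \<times> V) \<gamma>"
  have K: "is_graph (U \<times> V) \<gamma>"
    by (rule weight_joining_is_graph[OF J])
  have r_sum: "(\<Sum>v\<in>V. ?r (u, v)) = deg U \<alpha> u"
    using J u by (simp add: weight_joining_def)
  have "deg U \<alpha> u * (\<Sum>v\<in>V. \<Sum>v'\<in>V. \<gamma> (u, v) (u', v'))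
      = (\<Sum>v\<in>V. deg U \<alpha> u * (\<Sum>v'\<in>V. \<gamma> (u, v) (u', v')))"
    by (rule sum_distrib_left)
  also have "\<dots> = (\<Sum>v\<in>V. \<alpha> u u' * ?r (u, v))"
    using J u u' by (intro sum.cong refl) (simp add: weight_joining_def)
  also have "\<dots> = deg U \<alpha> u * \<alpha> u u'"
    by (simp add: r_sum sum_distrib_left[symmetric] mult.commute)
  finally have eq: "deg U \<alpha> u * (\<Sum>v\<in>V. \<Sum>v'\<in>V. \<gamma> (u, v) (u', v')) = deg U \<alpha> u * \<alpha> u u'" .
  show ?thesis
  proof (cases "deg U \<alpha> u = 0")
    case True
    have "finite V"
      using is_graph_finite[OF K] u by (auto dest: finite_cartesian_productD2)
    then have "?r (u, v) = 0" if "v \<in> V" for v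
      using r_sum True that deg_nonneg[OF K] u sum_nonneg_eq_0_iff[of V "\<lambda>v. ?r (u, v)"] by auto
    then have "\<gamma> (u, v) (u', v') = 0" if "v \<in> V" "v' \<in> V" for v v'
      using weight_eq_0_if_deg_eq_0[OF K] that u u' by simp
    then show ?thesis
      using weight_eq_0_if_deg_eq_0[OF G u u' True] by simp
  qed (use eq in simp)
qed

lemma weight_joining_marginal_snd:
  assumes J: "weight_joining U \<alpha> V \<beta> \<gamma>" and H: "is_graph V \<beta>" and v: "v \<in> V" and v': "v' \<in> V"
  shows "(\<Sum>u\<in>U. \<Sum>u'\<in>U. \<gamma> (u, v) (u', v')) = \<beta> v v'"
  using weight_joining_marginal_fst[OF weight_joining_swap[OF J] H v v'] by simp

text \<open>
  As \<^term>\<open>ln 0 = 0\<close>, a term with \<open>s x y = 0 < w x y\<close> contributes 0 instead of \<open>-\<infinity>\<close>;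
  this is why the Gibbs lemmas below assume that the first distribution is supported where the
  second one is.
\<close>

definition cross_entropy :: "'a set \<Rightarrow> ('a \<Rightarrow> 'a \<Rightarrow> real) \<Rightarrow> ('a \<Rightarrow> 'a \<Rightarrow> real) \<Rightarrow> real" where
  "cross_entropy X w s = (\<Sum>x\<in>X. \<Sum>y\<in>X. w x y * ln (s x y))"

lemma cross_entropy_relabel:
  assumes \<theta>: "bij_betw \<theta> X Y"
  shows "cross_entropy X (\<lambda>x y. w (\<theta> x) (\<theta> y)) (\<lambda>x y. s (\<theta> x) (\<theta> y)) = cross_entropy Y w s"
proof -
  have "cross_entropy X (\<lambda>x y. w (\<theta> x) (\<theta> y)) (\<lambda>x y. s (\<theta> x) (\<theta> y))
      = (\<Sum>x\<in>X. \<Sum>y\<in>Y. w (\<theta> x) y * ln (s (\<theta> x) y))"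
    unfolding cross_entropy_def by (intro sum.cong refl) (rule sum.reindex_bij_betw[OF \<theta>])
  also have "\<dots> = cross_entropy Y w s"
    unfolding cross_entropy_def by (rule sum.reindex_bij_betw[OF \<theta>])
  finally show ?thesis .
qed

lemma gibbs_equality:
  fixes g s :: "'c \<Rightarrow> real"
  assumes fin: "finite E" and g0: "\<And>e. e \<in> E \<Longrightarrow> 0 \<le> g e" and s0: "\<And>e. e \<in> E \<Longrightarrow> 0 \<le> s e"
    and g1: "sum g E = 1" and s1: "sum s E = 1"
    and supp: "\<And>e. e \<in> E \<Longrightarrow> 0 < g e \<Longrightarrow> 0 < s e"
    and eq: "(\<Sum>e\<in>E. g e * ln (g e)) = (\<Sum>e\<in>E. g e * ln (s e))"
    and e: "e \<in> E"
  shows "g e = s e"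
proof -
  define t where "t e = s e - g e - (g e * ln (s e) - g e * ln (g e))" for e
  have t_pos: "t e = g e * (s e / g e - 1 - ln (s e / g e))" if "e \<in> E" "0 < g e" for e
    using that supp[OF that] by (simp add: t_def ln_div field_simps)
  have t_zero: "t e = s e" if "g e = 0" for e
    using that by (simp add: t_def)
  have t_nonneg: "0 \<le> t e" if e: "e \<in> E" for e
  proof (cases "g e = 0")
    case False
    with e g0 have "0 < g e" by force
    moreover have "ln (s e / g e) \<le> s e / g e - 1"
      using \<open>0 < g e\<close> e supp by (intro ln_le_minus_one) simp
    ultimately show ?thesis using e by (simp add: t_pos)
  qed (use e s0 t_zero in simp)
  have "sum t E = 0"
    using g1 s1 eq by (simp add: t_def sum_subtractf)
  then have "t e = 0"
    using sum_nonneg_eq_0_iff[OF fin] t_nonneg e by blast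
  show ?thesis
  proof (cases "g e = 0")
    case False
    with e g0 have "0 < g e" by force
    with \<open>t e = 0\<close> e have "ln (s e / g e) = s e / g e - 1"
      by (simp add: t_pos)
    then have "s e / g e = 1"
      using \<open>0 < g e\<close> e supp by (intro ln_eq_minus_one) auto
    with \<open>0 < g e\<close> show ?thesis by simp
  qed (use \<open>t e = 0\<close> t_zero in simp)
qed

lemma cross_entropy_eq_imp_eq:
  assumes W: "is_graph X w" and S: "is_graph X s"
    and supp: "\<And>x y. x \<in> X \<Longrightarrow> y \<in> X \<Longrightarrow> 0 < w x y \<Longrightarrow> 0 < s x y"
    and eq: "cross_entropy X w w = cross_entropy X w s"
    and x: "x \<in> X" and y: "y \<in> X"
  shows "w x y = s x y"
proof -
  have pairs: "(\<Sum>e\<in>X \<times> X. F e) = (\<Sum>x\<in>X. \<Sum>y\<in>X. F (x, y))" for F :: "_ \<Rightarrow> real"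
    by (rule sum.cartesian_product')
  have "case_prod w (x, y) = case_prod s (x, y)"
  proof (rule gibbs_equality[where E = "X \<times> X"])
    show "(\<Sum>e\<in>X \<times> X. case_prod w e * ln (case_prod w e)) = (\<Sum>e\<in>X \<times> X. case_prod w e * ln (case_prod s e))"
      using eq by (simp add: pairs cross_entropy_def)
  qed (use W S supp x y in \<open>auto simp: pairs is_graph_def\<close>)
  then show ?thesis by simp
qed

lemma cross_entropy_tensor:
  fixes w :: "'a \<times> 'b \<Rightarrow> 'a \<times> 'b \<Rightarrow> real"
  assumes G: "is_graph U \<alpha>" and H: "is_graph V \<beta>"
    and w0: "\<And>x y. x \<in> U \<times> V \<Longrightarrow> y \<in> U \<times> V \<Longrightarrow> 0 \<le> w x y"
    and m1: "\<And>u u'. u \<in> U \<Longrightarrow> u' \<in> U \<Longrightarrow> (\<Sum>v\<in>V. \<Sum>v'\<in>V. w (u, v) (u', v')) = \<alpha> u u'"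
    and m2: "\<And>v v'. v \<in> V \<Longrightarrow> v' \<in> V \<Longrightarrow> (\<Sum>u\<in>U. \<Sum>u'\<in>U. w (u, v) (u', v')) = \<beta> v v'"
  shows "cross_entropy (U \<times> V) w (tensor \<alpha> \<beta>) = cross_entropy U \<alpha> \<alpha> + cross_entropy V \<beta> \<beta>"
proof -
  have split_ln: "w (u, v) (u', v') * ln (\<alpha> u u' * \<beta> v v')
      = w (u, v) (u', v') * ln (\<alpha> u u') + w (u, v) (u', v') * ln (\<beta> v v')"
    if "u \<in> U" "v \<in> V" "u' \<in> U" "v' \<in> V" for u v u' v'
  proof (cases "w (u, v) (u', v') = 0")
    case False
    have "w (u, v) (u', v') \<le> \<alpha> u u'" "w (u, v) (u', v') \<le> \<beta> v v'"
      using member_le_double_sum[OF is_graph_finite[OF H], of "\<lambda>a b. w (u, a) (u', b)"]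
        member_le_double_sum[OF is_graph_finite[OF G], of "\<lambda>a b. w (a, v) (b, v')"] w0 m1 m2 that
      by auto
    moreover have "0 < w (u, v) (u', v')"
      using False w0[of "(u, v)" "(u', v')"] that by simp
    ultimately have "0 < \<alpha> u u'" "0 < \<beta> v v'"
      by linarith+
    then show ?thesis
      by (simp add: ln_mult distrib_left)
  qed simp
  have "cross_entropy (U \<times> V) w (tensor \<alpha> \<beta>)
      = (\<Sum>x\<in>U \<times> V. \<Sum>y\<in>U \<times> V. w x y * ln (\<alpha> (fst x) (fst y)))
      + (\<Sum>x\<in>U \<times> V. \<Sum>y\<in>U \<times> V. w x y * ln (\<beta> (snd x) (snd y)))"
    unfolding cross_entropy_def sum.distrib[symmetric] tensor_def
    by (intro sum.cong refl) (auto simp: split_ln)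
  also have "(\<Sum>x\<in>U \<times> V. \<Sum>y\<in>U \<times> V. w x y * ln (\<alpha> (fst x) (fst y))) = cross_entropy U \<alpha> \<alpha>"
    unfolding cross_entropy_def sum_product_pairs_fst by (simp add: m1 sum_distrib_right[symmetric])
  also have "(\<Sum>x\<in>U \<times> V. \<Sum>y\<in>U \<times> V. w x y * ln (\<beta> (snd x) (snd y))) = cross_entropy V \<beta> \<beta>"
    unfolding cross_entropy_def sum_product_pairs_snd by (simp add: m2 sum_distrib_right[symmetric])
  finally show ?thesis .
qed

lemma weight_joining_eq_tensor_if_iso:
  assumes G: "is_graph U \<alpha>" and H: "is_graph V \<beta>" and J: "weight_joining U \<alpha> V \<beta> \<gamma>"
    and \<theta>: "bij_betw \<theta> (U \<times> V) (U \<times> V)"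
    and iso: "\<And>x y. x \<in> U \<times> V \<Longrightarrow> y \<in> U \<times> V \<Longrightarrow> \<gamma> x y = tensor \<alpha> \<beta> (\<theta> x) (\<theta> y)"
    and x: "x \<in> U \<times> V" and y: "y \<in> U \<times> V"
  shows "\<gamma> x y = tensor \<alpha> \<beta> x y"
proof (rule cross_entropy_eq_imp_eq[OF weight_joining_is_graph[OF J] is_graph_tensor[OF G H] _ _ x y])
  have K: "is_graph (U \<times> V) \<gamma>"
    by (rule weight_joining_is_graph[OF J])
  have m1: "(\<Sum>v\<in>V. \<Sum>v'\<in>V. \<gamma> (u, v) (u', v')) = \<alpha> u u'" if "u \<in> U" "u' \<in> U" for u u'
    using weight_joining_marginal_fst[OF J G] that .
  have m2: "(\<Sum>u\<in>U. \<Sum>u'\<in>U. \<gamma> (u, v) (u', v')) = \<beta> v v'" if "v \<in> V" "v' \<in> V" for v v'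
    using weight_joining_marginal_snd[OF J H] that .
  have tensor_m1: "(\<Sum>v\<in>V. \<Sum>v'\<in>V. tensor \<alpha> \<beta> (u, v) (u', v')) = \<alpha> u u'" for u u'
    using H by (simp add: tensor_def is_graph_def sum_distrib_left[symmetric])
  have tensor_m2: "(\<Sum>u\<in>U. \<Sum>u'\<in>U. tensor \<alpha> \<beta> (u, v) (u', v')) = \<beta> v v'" for v v'
    using G by (simp add: tensor_def is_graph_def sum_distrib_right[symmetric])
  show "0 < tensor \<alpha> \<beta> x y" if xy_mem: "x \<in> U \<times> V" "y \<in> U \<times> V" and "0 < \<gamma> x y" for x y
  proof -
    obtain u v u' v' where xy: "x = (u, v)" "y = (u', v')" "u \<in> U" "v \<in> V" "u' \<in> U" "v' \<in> V"
      using xy_mem by auto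
    have "\<gamma> x y \<le> \<alpha> u u'" "\<gamma> x y \<le> \<beta> v v'"
      using member_le_double_sum[OF is_graph_finite[OF H], of "\<lambda>a b. \<gamma> (u, a) (u', b)"]
        member_le_double_sum[OF is_graph_finite[OF G], of "\<lambda>a b. \<gamma> (a, v) (b, v')"]
        is_graph_nonneg[OF K] m1 m2 xy by auto
    then show ?thesis
      using \<open>0 < \<gamma> x y\<close> xy by (simp add: tensor_def)
  qed
  have "cross_entropy (U \<times> V) \<gamma> \<gamma> = cross_entropy (U \<times> V) (tensor \<alpha> \<beta>) (tensor \<alpha> \<beta>)"
    using cross_entropy_relabel[OF \<theta>, of "tensor \<alpha> \<beta>" "tensor \<alpha> \<beta>"] iso
    by (simp add: cross_entropy_def)
  also have "\<dots> = cross_entropy U \<alpha> \<alpha> + cross_entropy V \<beta> \<beta>"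
    using G H is_graph_nonneg[OF is_graph_tensor[OF G H]] tensor_m1 tensor_m2
    by (rule cross_entropy_tensor)
  also have "\<dots> = cross_entropy (U \<times> V) \<gamma> (tensor \<alpha> \<beta>)"
    using G H is_graph_nonneg[OF K] m1 m2 by (rule cross_entropy_tensor[symmetric])
  finally show "cross_entropy (U \<times> V) \<gamma> \<gamma> = cross_entropy (U \<times> V) \<gamma> (tensor \<alpha> \<beta>)" .
qed

theorem proposition4p6:
  fixes U :: "'a set" and \<alpha> :: "'a \<Rightarrow> 'a \<Rightarrow> real"
    and V :: "'b set" and \<beta> :: "'b \<Rightarrow> 'b \<Rightarrow> real"
  assumes G: "is_graph U \<alpha>" and H: "is_graph V \<beta>"
    and hyp: "\<forall>(W :: nat set) (\<kappa> :: nat \<Rightarrow> nat \<Rightarrow> real). is_graph W \<kappa> \<longrightarrow>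
        graph_divides U \<alpha> W \<kappa> \<longrightarrow> graph_divides V \<beta> W \<kappa> \<longrightarrow>
        graph_divides (U \<times> V) (tensor \<alpha> \<beta>) W \<kappa>"
  shows "strongly_disjoint U \<alpha> V \<beta>"
  unfolding strongly_disjoint_def
proof (intro allI impI ballI)
  fix \<gamma> x y
  assume J: "weight_joining U \<alpha> V \<beta> \<gamma>" and x: "x \<in> U \<times> V" and y: "y \<in> U \<times> V"
  have K: "is_graph (U \<times> V) \<gamma>"
    by (rule weight_joining_is_graph[OF J])
  have nat_hyp: "graph_divides (U \<times> V) (tensor \<alpha> \<beta>) W \<kappa>"
    if "is_graph W \<kappa>" "graph_divides U \<alpha> W \<kappa>" "graph_divides V \<beta> W \<kappa>"
    for W :: "nat set" and \<kappa>
    using hyp that by blast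
  have "graph_divides (U \<times> V) (tensor \<alpha> \<beta>) (U \<times> V) \<gamma>"
    using K nat_hyp weight_joining_divides_fst[OF J] weight_joining_divides_snd[OF J]
    by (rule graph_divides_nat_copy)
  then obtain \<theta> where "bij_betw \<theta> (U \<times> V) (U \<times> V)"
    and "\<And>x y. x \<in> U \<times> V \<Longrightarrow> y \<in> U \<times> V \<Longrightarrow> \<gamma> x y = tensor \<alpha> \<beta> (\<theta> x) (\<theta> y)"
    using graph_divides_same_card_imp_iso[OF K is_graph_tensor[OF G H] refl] by blast
  then show "\<gamma> x y = tensor \<alpha> \<beta> x y"
    using weight_joining_eq_tensor_if_iso[OF G H J] x y by blast
qed

end
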